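(* Let $n\ge 2$ be even. Consider the generalized $n$-gene repressilator system $$\dot r_i = a_i(p_{i-1}) - d_{r_i}(r_i),\qquad \dot p_i = k_i(r_i) - d_{p_i}(p_i),\qquad i=1,\dots,n,$$ (indices mod $n$), with functions satisfying the standing assumptions in the context. Assume $\alpha_i:=\lim_{x\to\infty}a_i(x)>0$ for all $i$, and that for all $i$, $\delta_i^R > a_i(0)$ and $\delta_i^P > k_i(d_{r_i}^{-1}(a_i(0)))$, where $\delta_i^R:=\lim_{x\to\infty} d_{r_i}(x)$ and $\delta_i^P:=\lim_{x\to\infty} d_{p_i}(x)$ (possibly $+\infty$). Then the central steady state $E_C$ exists and is a steady state: for each $i$ the fixed-point equation $p_i = f_i\circ f_{i-1}\circ\cdots\circ f_1\circ f_n\circ\cdots\circ f_{i+1}(p_i)$ has a positive solution, and there are such solutions $p_1^*,\dots,p_n^*>0$ for which $$E_C=\big(d_{r_1}^{-1}(a_1(p_n^* )),\dots,d_{r_n}^{-1}(a_n(p_{n-1}^* )),\,p_1^*,\dots,p_n^*\big)$$ is a steady state.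
   Context: Standing assumptions: each $a_i:[0,\infty)\to\mathbb{R}$ is $C^1$, nonnegative, strictly decreasing, with $a_i(0)>0$. Each $d_{r_i}, d_{p_i}, k_i:[0,\infty)\to\mathbb{R}$ is $C^1$, vanishes at $0$, and is strictly increasing on $(0,\infty)$. Define $f_i := d_{p_i}^{-1}\circ k_i\circ d_{r_i}^{-1}\circ a_i$. *)

theory Defs
  imports "HOL-Analysis.Analysis" "HOL-Library.Extended_Real"
begin

text \<open>Genes are indexed by 0, ..., n-1 (paper's 1..n shifted by one); indices are taken mod n.\<close>

definition C1_nonneg :: "(real \<Rightarrow> real) \<Rightarrow> bool" where
  "C1_nonneg g \<longleftrightarrow> (\<exists>g'. continuous_on {0..} g' \<and>
      (\<forall>x\<ge>0. (g has_real_derivative g' x) (at x within {0..})))"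

definition repression_fun :: "(real \<Rightarrow> real) \<Rightarrow> bool" where
  "repression_fun a \<longleftrightarrow> C1_nonneg a \<and> (\<forall>x\<ge>0. a x \<ge> 0) \<and>
      (\<forall>x y. 0 \<le> x \<longrightarrow> x < y \<longrightarrow> a y < a x) \<and> a 0 > 0"

definition rate_fun :: "(real \<Rightarrow> real) \<Rightarrow> bool" where
  "rate_fun d \<longleftrightarrow> C1_nonneg d \<and> d 0 = 0 \<and> strict_mono_on {0<..} d"

definition inv0 :: "(real \<Rightarrow> real) \<Rightarrow> real \<Rightarrow> real" where
  "inv0 g = the_inv_into {0..} g"

definition fmap :: "(nat \<Rightarrow> real \<Rightarrow> real) \<Rightarrow> (nat \<Rightarrow> real \<Rightarrow> real) \<Rightarrow> (nat \<Rightarrow> real \<Rightarrow> real)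
    \<Rightarrow> (nat \<Rightarrow> real \<Rightarrow> real) \<Rightarrow> nat \<Rightarrow> real \<Rightarrow> real" where
  "fmap a dr dp k i = inv0 (dp i) \<circ> k i \<circ> inv0 (dr i) \<circ> a i"

fun comp_steps :: "(nat \<Rightarrow> real \<Rightarrow> real) \<Rightarrow> nat \<Rightarrow> nat \<Rightarrow> nat \<Rightarrow> real \<Rightarrow> real" where
  "comp_steps f n i 0 x = x"
| "comp_steps f n i (Suc m) x = f ((i + Suc m) mod n) (comp_steps f n i m x)"

text \<open>cyc_comp f n i = f_i o f_{i-1} o ... o f_{i+1} (full cycle of length n ending in f_i).\<close>
definition cyc_comp :: "(nat \<Rightarrow> real \<Rightarrow> real) \<Rightarrow> nat \<Rightarrow> nat \<Rightarrow> real \<Rightarrow> real" where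
  "cyc_comp f n i = comp_steps f n i n"

definition prev :: "nat \<Rightarrow> nat \<Rightarrow> nat" where
  "prev n i = (i + n - 1) mod n"

definition steady_state :: "nat \<Rightarrow> (nat \<Rightarrow> real \<Rightarrow> real) \<Rightarrow> (nat \<Rightarrow> real \<Rightarrow> real) \<Rightarrow> (nat \<Rightarrow> real \<Rightarrow> real)
    \<Rightarrow> (nat \<Rightarrow> real \<Rightarrow> real) \<Rightarrow> (nat \<Rightarrow> real) \<Rightarrow> (nat \<Rightarrow> real) \<Rightarrow> bool" where
  "steady_state n a dr dp k r p \<longleftrightarrow> (\<forall>i<n. r i \<ge> 0 \<and> p i \<ge> 0 \<and>
      a i (p (prev n i)) - dr i (r i) = 0 \<and> k i (r i) - dp i (p i) = 0)"

end

theory Submission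
  imports Defs
begin

text \<open>Each map f_i is continuous on [0,\<infinity>) with values in a bounded interval (0, S_i]: since
  0 < a_i(p) \<le> a_i(0) < \<delta>_i^R, the inverse of d_{r_i} is only ever evaluated on a compact piece of
  its domain, and then k_i(d_{r_i}^{-1}(a_i(p))) \<le> k_i(d_{r_i}^{-1}(a_i(0))) < \<delta>_i^P does the same
  for d_{p_i}^{-1}. The full cyclic composition therefore maps [0, S] into (0, S] and has a positive
  fixed point by the intermediate value theorem. Carrying that point once around the cycle yields
  fixed points of all the other cyclic compositions, and consecutive points p_{i-1}, p_i of this
  orbit satisfy p_i = f_i(p_{i-1}), which is exactly the steady-state system.\<close>

lemma continuous_on_C1_nonneg: "C1_nonneg g \<Longrightarrow> continuous_on {0..} g"
  unfolding C1_nonneg_def continuous_on_eq_continuous_within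
  by (auto intro: DERIV_continuous)

lemma continuous_on_rate_fun: "rate_fun d \<Longrightarrow> continuous_on {0..} d"
  by (simp add: rate_fun_def continuous_on_C1_nonneg)

lemma continuous_on_repression_fun: "repression_fun a \<Longrightarrow> continuous_on {0..} a"
  by (simp add: repression_fun_def continuous_on_C1_nonneg)

lemma rate_fun_pos:
  assumes d: "rate_fun d" and "0 < x"
  shows "0 < d x"
proof (rule ccontr)
  assume "\<not> 0 < d x"
  have mono: "strict_mono_on {0<..} d" and "d 0 = 0"
    using d by (auto simp: rate_fun_def)
  have "d (x/2) < d x"
    using mono \<open>0 < x\<close> by (auto simp: strict_mono_on_def)
  with \<open>\<not> 0 < d x\<close> have neg: "d (x/2) < 0"
    by linarith
  have "continuous_on {0..x/2} d"
    using continuous_on_rate_fun[OF d] by (rule continuous_on_subset) auto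
  then obtain t where t: "0 \<le> t" "t \<le> x/2" "d t = d (x/2) / 2"
    using IVT2'[of d "x/2" "d (x/2) / 2" 0] neg \<open>d 0 = 0\<close> \<open>0 < x\<close> by auto
  then have "0 < t" "t < x/2"
    using neg \<open>d 0 = 0\<close> by (auto simp: order_le_less)
  then have "d t < d (x/2)"
    using mono by (auto simp: strict_mono_on_def)
  with t neg show False
    by linarith
qed

lemma rate_fun_less:
  assumes d: "rate_fun d" and "0 \<le> x" "x < y"
  shows "d x < d y"
proof (cases "x = 0")
  case True
  then show ?thesis
    using d rate_fun_pos[OF d] \<open>x < y\<close> by (simp add: rate_fun_def)
next
  case False
  then show ?thesis
    using d assms(2,3) by (simp add: rate_fun_def strict_mono_on_def)
qed

lemma rate_fun_le_iff: "rate_fun d \<Longrightarrow> 0 \<le> x \<Longrightarrow> 0 \<le> y \<Longrightarrow> d x \<le> d y \<longleftrightarrow> x \<le> y"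
  by (metis linorder_not_le order_le_less rate_fun_less)

lemma rate_fun_nonneg: "rate_fun d \<Longrightarrow> 0 \<le> x \<Longrightarrow> 0 \<le> d x"
  using rate_fun_le_iff[of d 0 x] by (simp add: rate_fun_def)

lemma rate_fun_inj_on: "rate_fun d \<Longrightarrow> inj_on d {0..}"
  by (intro inj_onI) (metis atLeast_iff order_antisym order_refl rate_fun_le_iff)

lemma rate_fun_image:
  assumes d: "rate_fun d" and "0 \<le> R"
  shows "d ` {0..R} = {0..d R}"
proof
  show "d ` {0..R} \<subseteq> {0..d R}"
    using rate_fun_le_iff[OF d] rate_fun_nonneg[OF d] \<open>0 \<le> R\<close> by auto
  have "continuous_on {0..R} d"
    using continuous_on_rate_fun[OF d] by (rule continuous_on_subset) auto
  then show "{0..d R} \<subseteq> d ` {0..R}"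
    using IVT'[of d 0 _ R] d \<open>0 \<le> R\<close> by (force simp: rate_fun_def)
qed

lemma inv0_rate_fun:
  assumes d: "rate_fun d" and "0 \<le> R" "y \<in> {0..d R}"
  shows "inv0 d y \<in> {0..R}" and "d (inv0 d y) = y"
proof -
  obtain x where x: "x \<in> {0..R}" "y = d x"
    using rate_fun_image[OF d \<open>0 \<le> R\<close>] \<open>y \<in> {0..d R}\<close> by (metis imageE)
  then have "inv0 d y = x"
    using rate_fun_inj_on[OF d] by (simp add: inv0_def the_inv_into_f_f)
  with x show "inv0 d y \<in> {0..R}" and "d (inv0 d y) = y"
    by simp_all
qed

lemma inv0_pos: "rate_fun d \<Longrightarrow> 0 \<le> R \<Longrightarrow> 0 < y \<Longrightarrow> y \<le> d R \<Longrightarrow> 0 < inv0 d y"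
  using inv0_rate_fun[of d R y] by (force simp: rate_fun_def order_le_less)

lemma continuous_on_inv0:
  assumes d: "rate_fun d" and "0 \<le> R"
  shows "continuous_on {0..d R} (inv0 d)"
proof -
  have "continuous_on {0..R} d"
    using continuous_on_rate_fun[OF d] by (rule continuous_on_subset) auto
  then have "continuous_on (d ` {0..R}) (inv0 d)"
    by (rule continuous_on_inv)
      (use rate_fun_inj_on[OF d] in \<open>auto simp: inv0_def intro!: the_inv_into_f_f\<close>)
  then show ?thesis
    using rate_fun_image[OF assms] by simp
qed

lemma repression_fun_pos:
  assumes a: "repression_fun a" and "0 \<le> p"
  shows "0 < a p"
proof -
  have "a (p + 1) < a p" and "0 \<le> a (p + 1)"
    using assms by (auto simp: repression_fun_def)
  then show ?thesis
    by linarith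
qed

lemma repression_fun_le: "repression_fun a \<Longrightarrow> 0 \<le> p \<Longrightarrow> a p \<le> a 0"
  by (cases "p = 0") (auto simp: repression_fun_def order_le_less)

lemma ereal_tendsto_at_top_exceeds:
  fixes d :: "real \<Rightarrow> real"
  assumes "((\<lambda>x. ereal (d x)) \<longlongrightarrow> \<delta>) at_top" and "ereal y < \<delta>"
  obtains R where "0 \<le> R" and "y < d R"
proof -
  have "eventually (\<lambda>x. ereal y < ereal (d x)) at_top"
    using order_tendstoD(1)[OF assms] .
  then obtain N where "\<And>x. N \<le> x \<Longrightarrow> y < d x"
    by (auto simp: eventually_at_top_linorder)
  then show ?thesis
    using that[of "max N 0"] by simp
qed

context
  fixes a dr dp k :: "real \<Rightarrow> real" and \<delta>R \<delta>P :: ereal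
  assumes a: "repression_fun a" and dr: "rate_fun dr" and dp: "rate_fun dp" and k: "rate_fun k"
    and dr_limit: "((\<lambda>x. ereal (dr x)) \<longlongrightarrow> \<delta>R) at_top"
    and dp_limit: "((\<lambda>x. ereal (dp x)) \<longlongrightarrow> \<delta>P) at_top"
    and dr_exceeds: "\<delta>R > ereal (a 0)"
    and dp_exceeds: "\<delta>P > ereal (k (inv0 dr (a 0)))"
begin

lemma mrna_response:
  assumes "0 \<le> p"
  shows "inv0 dr (a p) \<in> {0<..inv0 dr (a 0)}" and "dr (inv0 dr (a p)) = a p"
proof -
  obtain R where R: "0 \<le> R" "a 0 < dr R"
    using ereal_tendsto_at_top_exceeds[OF dr_limit dr_exceeds] .
  have inverse: "inv0 dr (a q) \<in> {0<..R} \<and> dr (inv0 dr (a q)) = a q" if "0 \<le> q" for q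
  proof -
    have "0 < a q" "a q \<le> dr R"
      using repression_fun_pos[OF a that] repression_fun_le[OF a that] R(2) by auto
    then show ?thesis
      using inv0_rate_fun[OF dr R(1), of "a q"] inv0_pos[OF dr R(1)] by auto
  qed
  then show "dr (inv0 dr (a p)) = a p"
    using \<open>0 \<le> p\<close> by blast
  have "dr (inv0 dr (a p)) \<le> dr (inv0 dr (a 0))"
    using inverse[OF \<open>0 \<le> p\<close>] inverse[of 0] repression_fun_le[OF a \<open>0 \<le> p\<close>] by simp
  then have "inv0 dr (a p) \<le> inv0 dr (a 0)"
    using inverse[OF \<open>0 \<le> p\<close>] inverse[of 0]
      rate_fun_le_iff[OF dr, of "inv0 dr (a p)" "inv0 dr (a 0)"] by simp
  with inverse[OF \<open>0 \<le> p\<close>] show "inv0 dr (a p) \<in> {0<..inv0 dr (a 0)}"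
    by simp
qed

lemma protein_response:
  obtains S where "continuous_on {0..} (inv0 dp \<circ> k \<circ> inv0 dr \<circ> a)"
    and "\<And>p. 0 \<le> p \<Longrightarrow> (inv0 dp \<circ> k \<circ> inv0 dr \<circ> a) p \<in> {0<..S}"
    and "\<And>p. 0 \<le> p \<Longrightarrow> dp ((inv0 dp \<circ> k \<circ> inv0 dr \<circ> a) p) = k (inv0 dr (a p))"
proof -
  obtain R where R: "0 \<le> R" "a 0 < dr R"
    using ereal_tendsto_at_top_exceeds[OF dr_limit dr_exceeds] .
  obtain S where S: "0 \<le> S" "k (inv0 dr (a 0)) < dp S"
    using ereal_tendsto_at_top_exceeds[OF dp_limit dp_exceeds] .
  have transcription: "k (inv0 dr (a p)) \<in> {0<..dp S}" if "0 \<le> p" for p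
  proof -
    have "inv0 dr (a p) \<in> {0<..inv0 dr (a 0)}"
      using mrna_response(1)[OF that] .
    then have "0 < k (inv0 dr (a p))" "k (inv0 dr (a p)) \<le> k (inv0 dr (a 0))"
      using rate_fun_pos[OF k] rate_fun_le_iff[OF k] by auto
    with S(2) show ?thesis
      by simp
  qed
  have protein: "(inv0 dp \<circ> k \<circ> inv0 dr \<circ> a) p \<in> {0<..S} \<and>
      dp ((inv0 dp \<circ> k \<circ> inv0 dr \<circ> a) p) = k (inv0 dr (a p))" if "0 \<le> p" for p
    using inv0_rate_fun[OF dp S(1)] inv0_pos[OF dp S(1)] transcription[OF that] by auto
  have "a ` {0..} \<subseteq> {0..dr R}"
    using repression_fun_pos[OF a] repression_fun_le[OF a] R(2) by fastforce
  from continuous_on_compose2[OF continuous_on_inv0[OF dr R(1)] continuous_on_repression_fun[OF a] this]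
  have "continuous_on {0..} (inv0 dr \<circ> a)"
    by (simp add: o_def)
  moreover have "(inv0 dr \<circ> a) ` {0..} \<subseteq> {0..}"
    using mrna_response(1) by fastforce
  ultimately have "continuous_on {0..} (k \<circ> inv0 dr \<circ> a)"
    using continuous_on_compose2[OF continuous_on_rate_fun[OF k]] by (simp add: o_def)
  moreover have "(k \<circ> inv0 dr \<circ> a) ` {0..} \<subseteq> {0..dp S}"
    using transcription by fastforce
  ultimately have "continuous_on {0..} (inv0 dp \<circ> k \<circ> inv0 dr \<circ> a)"
    using continuous_on_compose2[OF continuous_on_inv0[OF dp S(1)]] by (simp add: o_def)
  with protein show ?thesis
    using that by blast
qed

end

lemma comp_steps_add: "comp_steps f n (i + j) m (comp_steps f n i j x) = comp_steps f n i (j + m) x"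
  by (induction m) (simp_all add: add.assoc)

lemma comp_steps_period: "comp_steps f n (i + n) m x = comp_steps f n i m x"
proof (induction m)
  case (Suc m)
  have "(i + n + Suc m) mod n = (i + Suc m) mod n"
    by (metis add.commute add.left_commute mod_add_self2)
  with Suc show ?case
    by simp
qed simp

lemma cyc_comp_0_eq: "0 < n \<Longrightarrow> cyc_comp f n 0 x = f 0 (comp_steps f n 0 (n - 1) x)"
  by (metis Suc_diff_1 add_0 comp_steps.simps(2) cyc_comp_def mod_self)

lemma cyc_comp_orbit:
  assumes "cyc_comp f n 0 x = x"
  shows "cyc_comp f n i (comp_steps f n 0 i x) = comp_steps f n 0 i x"
proof -
  have "cyc_comp f n i (comp_steps f n 0 i x) = comp_steps f n 0 (n + i) x"
    using comp_steps_add[of f n 0 i] by (simp add: cyc_comp_def add.commute)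
  also have "\<dots> = comp_steps f n n i (cyc_comp f n 0 x)"
    using comp_steps_add[of f n 0 n] by (simp add: cyc_comp_def)
  also have "\<dots> = comp_steps f n 0 i x"
    using comp_steps_period[of f n 0] assms by simp
  finally show ?thesis .
qed

lemma comp_steps_orbit_prev:
  assumes "cyc_comp f n 0 x = x" and "i < n"
  shows "comp_steps f n 0 i x = f i (comp_steps f n 0 (prev n i) x)"
proof (cases i)
  case 0
  with assms show ?thesis
    using cyc_comp_0_eq[of n f x] by (simp add: prev_def)
next
  case (Suc m)
  with assms show ?thesis
    by (simp add: prev_def)
qed

context
  fixes f :: "nat \<Rightarrow> real \<Rightarrow> real" and n :: nat
  assumes n: "0 < n"
    and continuous: "\<And>i. i < n \<Longrightarrow> continuous_on {0..} (f i)"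
    and positive: "\<And>i x. i < n \<Longrightarrow> 0 \<le> x \<Longrightarrow> 0 < f i x"
begin

lemma comp_steps_nonneg: "0 \<le> x \<Longrightarrow> 0 \<le> comp_steps f n i m x"
proof (induction m)
  case (Suc m)
  have "(i + Suc m) mod n < n"
    using n by simp
  from positive[OF this Suc.IH[OF Suc.prems]] show ?case
    by simp
qed simp

lemma continuous_on_comp_steps: "continuous_on {0..} (comp_steps f n i m)"
proof (induction m)
  case 0
  then show ?case
    by simp
next
  case (Suc m)
  have "comp_steps f n i (Suc m) = f ((i + Suc m) mod n) \<circ> comp_steps f n i m"
    by (simp add: fun_eq_iff)
  moreover have "comp_steps f n i m ` {0..} \<subseteq> {0..}"
    using comp_steps_nonneg by auto
  ultimately show ?case
    using continuous_on_compose[OF Suc continuous_on_subset[OF continuous]] n by simp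
qed

lemma cyc_comp_fixed_point:
  assumes bounded: "\<And>x. 0 \<le> x \<Longrightarrow> f 0 x \<le> B"
  obtains x where "0 < x" and "cyc_comp f n 0 x = x"
proof -
  have range: "cyc_comp f n 0 x \<in> {0<..B}" if "0 \<le> x" for x
    using cyc_comp_0_eq[OF n] positive[OF n] bounded comp_steps_nonneg[OF that] by simp
  then have "0 \<le> B"
    by fastforce
  have "continuous_on {0..B} (\<lambda>x. cyc_comp f n 0 x - x)"
    unfolding cyc_comp_def
    by (intro continuous_intros continuous_on_subset[OF continuous_on_comp_steps]) auto
  then obtain x where x: "0 \<le> x" "cyc_comp f n 0 x - x = 0"
    using IVT2'[of "\<lambda>x. cyc_comp f n 0 x - x" B 0 0] range[of 0] range[OF \<open>0 \<le> B\<close>] \<open>0 \<le> B\<close>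
    by force
  then show ?thesis
    using that range[OF x(1)] by auto
qed

lemma cyclic_positive_orbit:
  assumes "\<And>x. 0 \<le> x \<Longrightarrow> f 0 x \<le> B"
  obtains p where "\<And>i. 0 < p i" and "\<And>i. cyc_comp f n i (p i) = p i"
    and "\<And>i. i < n \<Longrightarrow> p i = f i (p (prev n i))"
proof -
  obtain x where x: "0 < x" "cyc_comp f n 0 x = x"
    using cyc_comp_fixed_point assms .
  have "0 < comp_steps f n 0 i x" for i
    using x(1) positive n comp_steps_nonneg[of x] by (cases i) auto
  then show ?thesis
    using that[of "\<lambda>i. comp_steps f n 0 i x"] cyc_comp_orbit[OF x(2)]
      comp_steps_orbit_prev[OF x(2)] by blast
qed

end

theorem proposition3:
  fixes n :: nat
    and a dr dp k :: "nat \<Rightarrow> real \<Rightarrow> real"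
    and \<alpha> :: "nat \<Rightarrow> real"
    and \<delta>R \<delta>P :: "nat \<Rightarrow> ereal"
  assumes "n \<ge> 2" and "even n"
    and "\<And>i. i < n \<Longrightarrow> repression_fun (a i)"
    and "\<And>i. i < n \<Longrightarrow> rate_fun (dr i)"
    and "\<And>i. i < n \<Longrightarrow> rate_fun (dp i)"
    and "\<And>i. i < n \<Longrightarrow> rate_fun (k i)"
    and "\<And>i. i < n \<Longrightarrow> (a i \<longlongrightarrow> \<alpha> i) at_top"
    and "\<And>i. i < n \<Longrightarrow> \<alpha> i > 0"
    and "\<And>i. i < n \<Longrightarrow> ((\<lambda>x. ereal (dr i x)) \<longlongrightarrow> \<delta>R i) at_top"
    and "\<And>i. i < n \<Longrightarrow> ((\<lambda>x. ereal (dp i x)) \<longlongrightarrow> \<delta>P i) at_top"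
    and "\<And>i. i < n \<Longrightarrow> \<delta>R i > ereal (a i 0)"
    and "\<And>i. i < n \<Longrightarrow> \<delta>P i > ereal (k i (inv0 (dr i) (a i 0)))"
  shows "(\<forall>i<n. \<exists>x>0. cyc_comp (fmap a dr dp k) n i x = x) \<and>
         (\<exists>pstar :: nat \<Rightarrow> real.
            (\<forall>i<n. pstar i > 0 \<and> cyc_comp (fmap a dr dp k) n i (pstar i) = pstar i) \<and>
            steady_state n a dr dp k (\<lambda>i. inv0 (dr i) (a i (pstar (prev n i)))) pstar)"
proof -
  note gene = assms(3-6,9-12)
  define F where "F = fmap a dr dp k"
  have F_continuous: "continuous_on {0..} (F i)"
    and F_pos: "0 \<le> q \<Longrightarrow> 0 < F i q"
    and F_bounded: "\<exists>S. \<forall>q\<ge>0. F i q \<le> S"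
    and F_protein: "0 \<le> q \<Longrightarrow> dp i (F i q) = k i (inv0 (dr i) (a i q))"
    if "i < n" for i q
    using protein_response[OF gene[OF that]] unfolding F_def fmap_def greaterThanAtMost_iff
    by metis+
  have "0 < n"
    using assms(1) by simp
  then obtain B where F0_bounded: "\<And>q. 0 \<le> q \<Longrightarrow> F 0 q \<le> B"
    using F_bounded by blast
  obtain p where p_pos: "\<And>i. 0 < p i" and p_fixed: "\<And>i. cyc_comp F n i (p i) = p i"
    and p_prev: "\<And>i. i < n \<Longrightarrow> p i = F i (p (prev n i))"
    using cyclic_positive_orbit[where f = F and n = n and B = B] \<open>0 < n\<close> F_continuous F_pos F0_bounded
    by blast
  have "steady_state n a dr dp k (\<lambda>i. inv0 (dr i) (a i (p (prev n i)))) p"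
    unfolding steady_state_def
  proof (intro allI impI)
    fix i assume "i < n"
    have "0 \<le> p (prev n i)"
      using p_pos less_imp_le by blast
    then show "0 \<le> inv0 (dr i) (a i (p (prev n i))) \<and> 0 \<le> p i \<and>
        a i (p (prev n i)) - dr i (inv0 (dr i) (a i (p (prev n i)))) = 0 \<and>
        k i (inv0 (dr i) (a i (p (prev n i)))) - dp i (p i) = 0"
      using mrna_response[OF gene[OF \<open>i < n\<close>] \<open>0 \<le> p (prev n i)\<close>] F_protein[OF \<open>i < n\<close>] p_prev[OF \<open>i < n\<close>]
        p_pos[of i] by auto
  qed
  then show ?thesis
    using p_pos p_fixed unfolding F_def by blast
qed

end
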